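(* Let $\beta\in(1,3/2]$. The restriction $\varphi'=\varphi|_Z:Z\to D$ is a bijection which is measurable with measurable inverse.
   Context: $\vec q_0=(0,0)$, $\vec q_1=(1,0)$, $\vec q_2=(0,1)$; $S_\beta$ is the attractor of the IFS $f_{\vec q_i}(\vec z)=(\vec z+\vec q_i)/\beta$ (for $1<\beta\le3/2$ the closed triangle with vertices $(0,0)$, $(\frac1{\beta-1},0)$, $(0,\frac1{\beta-1})$), with Borel $\sigma$-algebra. Subsets of $S_\beta$: $E_0=[0,\frac1\beta)\times[0,\frac1\beta)$; $E_1=\{0\le y<\frac1\beta,\ \frac{1}{\beta(\beta-1)}<x+y\le\frac{1}{\beta-1}\}$; $E_2=\{0\le x<\frac1\beta,\ \frac{1}{\beta(\beta-1)}<x+y\le\frac{1}{\beta-1}\}$; $C_{01}=\{x\ge\frac1\beta,\ 0\le y<\frac1\beta,\ x+y\le\frac{1}{\beta(\beta-1)}\}$; $C_{12}=\{x\ge\frac1\beta,\ y\ge\frac1\beta,\ \frac{1}{\beta(\beta-1)}<x+y\le\frac{1}{\beta-1}\}$; $C_{02}=\{0\le x<\frac1\beta,\ y\ge\frac1\beta,\ x+y\le\frac{1}{\beta(\beta-1)}\}$; $C_{012}=\{x\ge\frac1\beta,\ y\ge\frac1\beta,\ x+y\le\frac{1}{\beta(\beta-1)}\}$; $C=C_{01}\cup C_{12}\cup C_{02}$. $\Omega=\{0,1\}^{\mathbb N}$, $\Upsilon=\{0,1,2\}^{\mathbb N}$ with product $\sigma$-algebras and left shifts $\sigma,\sigma'$.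 $K_\beta$ on $\Omega\times\Upsilon\times S_\beta$: $K_\beta(\omega,\upsilon,\vec z)=(\omega,\upsilon,\beta\vec z-\vec q_i)$ if $\vec z\in E_i$; $(\sigma\omega,\upsilon,\beta\vec z-\vec q_i)$ if $\omega_1=0$, $\vec z\in C_{ij}$ ($ij\in\{01,12,02\}$); $(\sigma\omega,\upsilon,\beta\vec z-\vec q_j)$ if $\omega_1=1$, $\vec z\in C_{ij}$; $(\omega,\sigma'\upsilon,\beta\vec z-\vec q_i)$ if $\vec z\in C_{012}$, $\upsilon_1=i$. The digit $d_1(\omega,\upsilon,\vec z)$ is the vector subtracted, $d_n=d_1\circ K_\beta^{n-1}$. Define $\varphi:\Omega\times\Upsilon\times S_\beta\to\Upsilon$ by $\varphi(\omega,\upsilon,\vec z)=(b_1,b_2,\ldots)$ where $d_n(\omega,\upsilon,\vec z)=\vec q_{b_n}$. Let $Z$ be the set of $(\omega,\upsilon,\vec z)$ such that $K_\beta^n(\omega,\upsilon,\vec z)\in\Omega\times\Upsilon\times C$ for infinitely many $n$ and $K_\beta^n(\omega,\upsilon,\vec z)\in\Omega\times\Upsilon\times C_{012}$ for infinitely many $n$. Let $D$ be the set of $(b_1,b_2,\ldots)\in\Upsilon$ such that $\sum_{i\ge1}\vec q_{b_{j+i-1}}\beta^{-i}\in C$ for infinitely many $j$ and $\sum_{i\ge1}\vec q_{b_{j+i-1}}\beta^{-i}\in C_{012}$ for infinitely many $j$. (One has $\varphi(Z)=D$.) *)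

theory Defs
  imports "HOL-Probability.Probability"
begin

text \<open>Sequences in Omega = {0,1}^N and
  Upsilon = {0,1,2}^N are functions nat => nat with values in {0,1} resp. {0,1,2};
  indexing is 0-based, so omega_1 of the paper is omega 0.\<close>

definition qv :: "nat \<Rightarrow> real \<times> real" where
  "qv i = (if i = 1 then (1, 0) else if i = 2 then (0, 1) else (0, 0))"

text \<open>S_beta: for 1 < beta <= 3/2 the attractor is the closed triangle (as stated in the paper).\<close>
definition S :: "real \<Rightarrow> (real \<times> real) set" where
  "S \<beta> = {(x, y). 0 \<le> x \<and> 0 \<le> y \<and> x + y \<le> 1 / (\<beta> - 1)}"

definition E0 :: "real \<Rightarrow> (real \<times> real) set" where
  "E0 \<beta> = S \<beta> \<inter> {(x, y). 0 \<le> x \<and> x < 1/\<beta> \<and> 0 \<le> y \<and> y < 1/\<beta>}"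
definition E1 :: "real \<Rightarrow> (real \<times> real) set" where
  "E1 \<beta> = S \<beta> \<inter> {(x, y). 0 \<le> y \<and> y < 1/\<beta> \<and> 1/(\<beta>*(\<beta>-1)) < x + y \<and> x + y \<le> 1/(\<beta>-1)}"
definition E2 :: "real \<Rightarrow> (real \<times> real) set" where
  "E2 \<beta> = S \<beta> \<inter> {(x, y). 0 \<le> x \<and> x < 1/\<beta> \<and> 1/(\<beta>*(\<beta>-1)) < x + y \<and> x + y \<le> 1/(\<beta>-1)}"
definition C01 :: "real \<Rightarrow> (real \<times> real) set" where
  "C01 \<beta> = S \<beta> \<inter> {(x, y). x \<ge> 1/\<beta> \<and> 0 \<le> y \<and> y < 1/\<beta> \<and> x + y \<le> 1/(\<beta>*(\<beta>-1))}"
definition C12 :: "real \<Rightarrow> (real \<times> real) set" where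
  "C12 \<beta> = S \<beta> \<inter> {(x, y). x \<ge> 1/\<beta> \<and> y \<ge> 1/\<beta> \<and> 1/(\<beta>*(\<beta>-1)) < x + y \<and> x + y \<le> 1/(\<beta>-1)}"
definition C02 :: "real \<Rightarrow> (real \<times> real) set" where
  "C02 \<beta> = S \<beta> \<inter> {(x, y). 0 \<le> x \<and> x < 1/\<beta> \<and> y \<ge> 1/\<beta> \<and> x + y \<le> 1/(\<beta>*(\<beta>-1))}"
definition C012 :: "real \<Rightarrow> (real \<times> real) set" where
  "C012 \<beta> = S \<beta> \<inter> {(x, y). x \<ge> 1/\<beta> \<and> y \<ge> 1/\<beta> \<and> x + y \<le> 1/(\<beta>*(\<beta>-1))}"
definition Cs :: "real \<Rightarrow> (real \<times> real) set" where
  "Cs \<beta> = C01 \<beta> \<union> C12 \<beta> \<union> C02 \<beta>"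

text \<open>Index of the digit d_1: d_1(omega,upsilon,z) = qv (digit beta (omega,upsilon,z)).\<close>
definition digit :: "real \<Rightarrow> (nat \<Rightarrow> nat) \<times> (nat \<Rightarrow> nat) \<times> (real \<times> real) \<Rightarrow> nat" where
  "digit \<beta> p = (case p of (\<omega>, \<upsilon>, z) \<Rightarrow>
     if z \<in> E0 \<beta> then 0
     else if z \<in> E1 \<beta> then 1
     else if z \<in> E2 \<beta> then 2
     else if z \<in> C01 \<beta> then (if \<omega> 0 = 0 then 0 else 1)
     else if z \<in> C12 \<beta> then (if \<omega> 0 = 0 then 1 else 2)
     else if z \<in> C02 \<beta> then (if \<omega> 0 = 0 then 0 else 2)
     else \<upsilon> 0)"

definition shift :: "(nat \<Rightarrow> nat) \<Rightarrow> (nat \<Rightarrow> nat)" where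
  "shift s = (\<lambda>n. s (Suc n))"

definition K :: "real \<Rightarrow> (nat \<Rightarrow> nat) \<times> (nat \<Rightarrow> nat) \<times> (real \<times> real)
                     \<Rightarrow> (nat \<Rightarrow> nat) \<times> (nat \<Rightarrow> nat) \<times> (real \<times> real)" where
  "K \<beta> p = (case p of (\<omega>, \<upsilon>, z) \<Rightarrow>
     (if z \<in> Cs \<beta> then shift \<omega> else \<omega>,
      if z \<in> C012 \<beta> then shift \<upsilon> else \<upsilon>,
      \<beta> *\<^sub>R z - qv (digit \<beta> p)))"

text \<open>phi: the sequence of digit indices; b_(n+1) (paper) = phi beta p n.\<close>
definition phi :: "real \<Rightarrow> (nat \<Rightarrow> nat) \<times> (nat \<Rightarrow> nat) \<times> (real \<times> real) \<Rightarrow> (nat \<Rightarrow> nat)" where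
  "phi \<beta> p = (\<lambda>n. digit \<beta> ((K \<beta> ^^ n) p))"

definition Omega_M :: "(nat \<Rightarrow> nat) measure" where
  "Omega_M = PiM UNIV (\<lambda>_. count_space {0, 1})"

definition Upsilon_M :: "(nat \<Rightarrow> nat) measure" where
  "Upsilon_M = PiM UNIV (\<lambda>_. count_space {0, 1, 2})"

definition S_M :: "real \<Rightarrow> (real \<times> real) measure" where
  "S_M \<beta> = restrict_space borel (S \<beta>)"

definition X_M :: "real \<Rightarrow> ((nat \<Rightarrow> nat) \<times> (nat \<Rightarrow> nat) \<times> (real \<times> real)) measure" where
  "X_M \<beta> = Omega_M \<Otimes>\<^sub>M (Upsilon_M \<Otimes>\<^sub>M S_M \<beta>)"

definition Z :: "real \<Rightarrow> ((nat \<Rightarrow> nat) \<times> (nat \<Rightarrow> nat) \<times> (real \<times> real)) set" where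
  "Z \<beta> = {p \<in> space (X_M \<beta>).
            (\<exists>\<^sub>\<infinity> n. snd (snd ((K \<beta> ^^ n) p)) \<in> Cs \<beta>) \<and>
            (\<exists>\<^sub>\<infinity> n. snd (snd ((K \<beta> ^^ n) p)) \<in> C012 \<beta>)}"

definition D :: "real \<Rightarrow> (nat \<Rightarrow> nat) set" where
  "D \<beta> = {b \<in> space Upsilon_M.
            (\<exists>\<^sub>\<infinity> j. (\<Sum>i. (1 / \<beta> ^ Suc i) *\<^sub>R qv (b (j + i))) \<in> Cs \<beta>) \<and>
            (\<exists>\<^sub>\<infinity> j. (\<Sum>i. (1 / \<beta> ^ Suc i) *\<^sub>R qv (b (j + i))) \<in> C012 \<beta>)}"

end

theory Submission
  imports Defs
begin

text \<open>Along an orbit of \<open>K\<^sub>\<beta>\<close> the point \<open>z n\<close> stays in the bounded set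
  \<open>S\<^sub>\<beta>\<close> and satisfies \<open>z (n + 1) = \<beta> z n - q (b n)\<close>, which forces
  \<open>z n = (\<Sum>i. \<beta>^-(i + 1) q (b (n + i)))\<close>: the orbit is determined by the digit sequence
  \<open>b = \<phi>(\<omega>, \<upsilon>, z)\<close>. The coin \<open>\<omega>\<^sub>k\<close> is consumed at the \<open>k\<close>-th visit of the orbit
  to \<open>C\<close> and can be read off from the digit chosen there; likewise \<open>\<upsilon>\<^sub>k\<close> is the digit at
  the \<open>k\<close>-th visit to \<open>C\<^sub>0\<^sub>1\<^sub>2\<close>. On \<open>Z\<close> both kinds of visits recur forever, so \<open>\<omega>\<close>
  and \<open>\<upsilon>\<close> are recovered completely. This gives an explicit inverse on \<open>D\<close> built from
  series and hitting times, hence measurable, while \<open>\<phi>\<close> is measurable because \<open>K\<^sub>\<beta>\<close> is.\<close>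

section \<open>The partition of the triangle\<close>

text \<open>The thresholds are parameters so that the arithmetic provers treat them as atoms.\<close>

lemma mem_regions_iff:
  assumes "a = 1/\<beta>" "c = 1/(\<beta>*(\<beta>-1))" "M = 1/(\<beta>-1)"
  shows "(x, y) \<in> S \<beta> \<longleftrightarrow> 0 \<le> x \<and> 0 \<le> y \<and> x + y \<le> M"
    and "(x, y) \<in> E0 \<beta> \<longleftrightarrow> (x, y) \<in> S \<beta> \<and> x < a \<and> y < a"
    and "(x, y) \<in> E1 \<beta> \<longleftrightarrow> (x, y) \<in> S \<beta> \<and> y < a \<and> c < x + y"
    and "(x, y) \<in> E2 \<beta> \<longleftrightarrow> (x, y) \<in> S \<beta> \<and> x < a \<and> c < x + y"
    and "(x, y) \<in> C01 \<beta> \<longleftrightarrow> (x, y) \<in> S \<beta> \<and> a \<le> x \<and> y < a \<and> x + y \<le> c"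
    and "(x, y) \<in> C12 \<beta> \<longleftrightarrow> (x, y) \<in> S \<beta> \<and> a \<le> x \<and> a \<le> y \<and> c < x + y"
    and "(x, y) \<in> C02 \<beta> \<longleftrightarrow> (x, y) \<in> S \<beta> \<and> x < a \<and> a \<le> y \<and> x + y \<le> c"
    and "(x, y) \<in> C012 \<beta> \<longleftrightarrow> (x, y) \<in> S \<beta> \<and> a \<le> x \<and> a \<le> y \<and> x + y \<le> c"
  unfolding assms S_def E0_def E1_def E2_def C01_def C12_def C02_def C012_def by auto

lemma admissible_digit_iff:
  fixes \<beta> x y :: real
  assumes "1 < \<beta>" "(x, y) \<in> S \<beta>"
  shows "\<beta> *\<^sub>R (x, y) - qv d \<in> S \<beta> \<longleftrightarrow>
    (if d = 1 then 1/\<beta> \<le> x else if d = 2 then 1/\<beta> \<le> y else x + y \<le> 1/(\<beta>*(\<beta>-1)))"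
proof -
  have xy: "0 \<le> x" "0 \<le> y" "x + y \<le> 1/(\<beta>-1)" using assms(2) by (auto simp: S_def)
  have "\<beta> * (x + y) \<le> \<beta> * (1/(\<beta>-1))" using xy assms(1) by (intro mult_left_mono) auto
  also have "\<dots> = 1/(\<beta>-1) + 1" using assms(1) by (simp add: field_simps)
  finally have "\<beta> * x + \<beta> * y - 1 \<le> 1/(\<beta>-1)" by (simp add: algebra_simps)
  moreover have "0 \<le> \<beta> * x" "0 \<le> \<beta> * y" using xy assms(1) by auto
  moreover have "1/\<beta> \<le> t \<longleftrightarrow> 1 \<le> \<beta> * t" "s \<le> 1/(\<beta>*(\<beta>-1)) \<longleftrightarrow> \<beta> * s \<le> 1/(\<beta>-1)" for s t
    using assms(1) by (simp_all add: field_simps)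
  ultimately show ?thesis by (auto simp: S_def qv_def algebra_simps)
qed

text \<open>As in \<open>digit\<close>, \<open>E1\<close> and \<open>E2\<close> are tested after \<open>E0\<close>; the remaining regions are
  pairwise disjoint.\<close>

lemma digit_cases:
  assumes "z \<in> S \<beta>"
  obtains (E0) "z \<in> E0 \<beta>" "digit \<beta> (\<omega>, \<upsilon>, z) = 0"
    | (E1) "z \<in> E1 \<beta> - E0 \<beta>" "digit \<beta> (\<omega>, \<upsilon>, z) = 1"
    | (E2) "z \<in> E2 \<beta> - E0 \<beta> - E1 \<beta>" "digit \<beta> (\<omega>, \<upsilon>, z) = 2"
    | (C01) "z \<in> C01 \<beta>" "digit \<beta> (\<omega>, \<upsilon>, z) = (if \<omega> 0 = 0 then 0 else 1)"
    | (C12) "z \<in> C12 \<beta>" "digit \<beta> (\<omega>, \<upsilon>, z) = (if \<omega> 0 = 0 then 1 else 2)"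
    | (C02) "z \<in> C02 \<beta>" "digit \<beta> (\<omega>, \<upsilon>, z) = (if \<omega> 0 = 0 then 0 else 2)"
    | (C012) "z \<in> C012 \<beta>" "digit \<beta> (\<omega>, \<upsilon>, z) = \<upsilon> 0"
proof -
  obtain x y where z: "z = (x, y)" by fastforce
  define a c M where "a = 1/\<beta>" and "c = 1/(\<beta>*(\<beta>-1))" and "M = 1/(\<beta>-1)"
  note R = mem_regions_iff[OF a_def c_def M_def]
  have cover: "z \<in> E0 \<beta> \<union> E1 \<beta> \<union> E2 \<beta> \<union> C01 \<beta> \<union> C12 \<beta> \<union> C02 \<beta> \<union> C012 \<beta>"
    using assms unfolding z by (auto simp: R)
  have E_disjoint: "z \<notin> E0 \<beta> \<union> E1 \<beta> \<union> E2 \<beta>" if "z \<in> C01 \<beta> \<union> C12 \<beta> \<union> C02 \<beta> \<union> C012 \<beta>"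
    using that unfolding z by (auto simp: R)
  have C_disjoint: "z \<in> C01 \<beta> \<Longrightarrow> z \<notin> C12 \<beta> \<union> C02 \<beta> \<union> C012 \<beta>"
    "z \<in> C12 \<beta> \<Longrightarrow> z \<notin> C02 \<beta> \<union> C012 \<beta>" "z \<in> C02 \<beta> \<Longrightarrow> z \<notin> C012 \<beta>"
    unfolding z by (auto simp: R)
  from cover consider "z \<in> E0 \<beta>" | "z \<in> E1 \<beta> - E0 \<beta>" | "z \<in> E2 \<beta> - E0 \<beta> - E1 \<beta>"
    | "z \<in> C01 \<beta>" | "z \<in> C12 \<beta>" | "z \<in> C02 \<beta>" | "z \<in> C012 \<beta>"
    by blast
  then show thesis
  proof cases
    case 1 then show ?thesis by (intro E0) (auto simp: digit_def)
  next
    case 2 then show ?thesis by (intro E1) (auto simp: digit_def)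
  next
    case 3 then show ?thesis by (intro E2) (auto simp: digit_def)
  next
    case 4 then show ?thesis using E_disjoint by (intro C01) (auto simp: digit_def)
  next
    case 5 then show ?thesis using E_disjoint C_disjoint by (intro C12) (auto simp: digit_def)
  next
    case 6 then show ?thesis using E_disjoint C_disjoint by (intro C02) (auto simp: digit_def)
  next
    case 7 then show ?thesis using E_disjoint C_disjoint by (intro C012) (auto simp: digit_def)
  qed
qed

lemma digit_admissible:
  assumes "1 < \<beta>" "\<beta> \<le> 3/2" "snd (snd p) \<in> S \<beta>"
  shows "\<beta> *\<^sub>R snd (snd p) - qv (digit \<beta> p) \<in> S \<beta>"
proof -
  obtain \<omega> \<upsilon> x y where p: "p = (\<omega>, \<upsilon>, x, y)" by (metis prod.exhaust)
  define a c M where "a = 1/\<beta>" and "c = 1/(\<beta>*(\<beta>-1))" and "M = 1/(\<beta>-1)"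
  note R = mem_regions_iff[OF a_def c_def M_def]
  have xy: "(x, y) \<in> S \<beta>" using assms(3) by (simp add: p)
  txt \<open>This is the only use of \<open>\<beta> \<le> 3/2\<close>: on \<open>E\<^sub>0\<close> it gives \<open>x + y < 2/\<beta> \<le> c\<close>.\<close>
  have "2 * a \<le> c" using assms unfolding a_def c_def by (simp add: field_simps)
  let ?d = "digit \<beta> (\<omega>, \<upsilon>, x, y)"
  have "if ?d = 1 then a \<le> x else if ?d = 2 then a \<le> y else x + y \<le> c"
    by (rule digit_cases[OF xy, of \<omega> \<upsilon>]) (use \<open>2 * a \<le> c\<close> in \<open>auto simp: R\<close>)
  then show ?thesis
    unfolding p snd_conv admissible_digit_iff[OF assms(1) xy] a_def c_def .
qed

text \<open>On \<open>C\<^sub>i\<^sub>j\<close> with \<open>i < j\<close>, coin \<open>0\<close> selects digit \<open>i\<close> and coin \<open>1\<close> digit \<open>j\<close>.\<close>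

definition coin_for :: "real \<Rightarrow> real \<times> real \<Rightarrow> nat \<Rightarrow> nat" where
  "coin_for \<beta> z d = (if d = 0 \<or> d = 1 \<and> z \<in> C12 \<beta> then 0 else 1)"

lemma digit_eqI:
  assumes "1 < \<beta>" "z \<in> S \<beta>" "d \<in> {0, 1, 2}" "\<beta> *\<^sub>R z - qv d \<in> S \<beta>"
    and "z \<in> Cs \<beta> \<Longrightarrow> \<omega> 0 = coin_for \<beta> z d" and "z \<in> C012 \<beta> \<Longrightarrow> \<upsilon> 0 = d"
  shows "digit \<beta> (\<omega>, \<upsilon>, z) = d"
proof -
  obtain x y where z: "z = (x, y)" by fastforce
  define a c M where "a = 1/\<beta>" and "c = 1/(\<beta>*(\<beta>-1))" and "M = 1/(\<beta>-1)"
  note R = mem_regions_iff[OF a_def c_def M_def]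
  have admissible: "if d = 1 then a \<le> x else if d = 2 then a \<le> y else x + y \<le> c"
    using assms(4) unfolding z admissible_digit_iff[OF assms(1) assms(2)[unfolded z]] a_def c_def .
  show ?thesis
    by (rule digit_cases[OF assms(2), of \<omega> \<upsilon>])
      (use admissible assms(3,5,6) in \<open>auto simp: z R coin_for_def Cs_def\<close>)
qed

lemma coin_for_digit:
  assumes "z \<in> Cs \<beta>" "\<omega> 0 \<in> {0, 1}"
  shows "coin_for \<beta> z (digit \<beta> (\<omega>, \<upsilon>, z)) = \<omega> 0"
proof -
  obtain x y where z: "z = (x, y)" by fastforce
  define a c M where "a = 1/\<beta>" and "c = 1/(\<beta>*(\<beta>-1))" and "M = 1/(\<beta>-1)"
  note R = mem_regions_iff[OF a_def c_def M_def]
  have "z \<in> S \<beta>" using assms(1) by (auto simp: Cs_def C01_def C12_def C02_def)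
  then show ?thesis
    by (rule digit_cases[of z \<beta> \<omega> \<upsilon>]) (use assms in \<open>auto simp: z R coin_for_def Cs_def\<close>)
qed

lemma digit_C012:
  assumes "z \<in> C012 \<beta>" shows "digit \<beta> (\<omega>, \<upsilon>, z) = \<upsilon> 0"
proof -
  obtain x y where z: "z = (x, y)" by fastforce
  define a c M where "a = 1/\<beta>" and "c = 1/(\<beta>*(\<beta>-1))" and "M = 1/(\<beta>-1)"
  note R = mem_regions_iff[OF a_def c_def M_def]
  have "z \<in> S \<beta>" using assms by (auto simp: C012_def)
  then show ?thesis
    by (rule digit_cases[of z \<beta> \<omega> \<upsilon>]) (use assms in \<open>auto simp: z R\<close>)
qed

lemma digit_in_range: "fst (snd p) 0 \<in> {0, 1, 2} \<Longrightarrow> digit \<beta> p \<in> {0, 1, 2}"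
  by (simp add: digit_def split_beta)

lemma bounded_S: "bounded (S \<beta>)"
proof (rule boundedI)
  show "norm z \<le> 1 / (\<beta> - 1)" if "z \<in> S \<beta>" for z
  proof -
    obtain x y where z: "z = (x, y)" by fastforce
    have "norm z \<le> norm x + norm y" unfolding z by (rule norm_Pair_le)
    also have "\<dots> \<le> 1 / (\<beta> - 1)" using that by (simp add: z S_def)
    finally show ?thesis .
  qed
qed

section \<open>Expansions in base \<open>\<beta>\<close>\<close>

lemma bounded_orbit_sums:
  fixes w c :: "nat \<Rightarrow> 'a::real_normed_vector"
  assumes "1 < \<beta>" and "bounded (range w)" and "\<And>n. w (Suc n) = \<beta> *\<^sub>R w n - c n"
  shows "(\<lambda>i. (1 / \<beta> ^ Suc i) *\<^sub>R c i) sums w 0"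
proof -
  have partial: "(\<Sum>i<n. (1 / \<beta> ^ Suc i) *\<^sub>R c i) = w 0 - (1 / \<beta> ^ n) *\<^sub>R w n" for n
  proof (induction n)
    case (Suc n)
    have "(1 / \<beta> ^ Suc n) *\<^sub>R w (Suc n) = (1 / \<beta> ^ n) *\<^sub>R w n - (1 / \<beta> ^ Suc n) *\<^sub>R c n"
      using assms(1) by (simp add: assms(3) scaleR_diff_right)
    then show ?case using Suc by simp
  qed simp
  obtain B where B: "\<And>n. norm (w n) \<le> B"
    using assms(2) by (meson bounded_iff rangeI)
  have "(\<lambda>n. (1 / \<beta> ^ n) *\<^sub>R w n) \<longlonglongrightarrow> 0"
  proof (rule Lim_null_comparison)
    show "\<forall>\<^sub>F n in sequentially. norm ((1 / \<beta> ^ n) *\<^sub>R w n) \<le> B * (1 / \<beta>) ^ n"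
      using assms(1) B by (intro always_eventually allI) (simp add: field_simps)
    show "(\<lambda>n. B * (1 / \<beta>) ^ n) \<longlonglongrightarrow> 0"
      using assms(1) by (intro tendsto_mult_right_zero LIMSEQ_power_zero) auto
  qed
  then show ?thesis
    unfolding sums_def partial using tendsto_diff[OF tendsto_const] by fastforce
qed

definition tail_point :: "real \<Rightarrow> (nat \<Rightarrow> nat) \<Rightarrow> nat \<Rightarrow> real \<times> real" where
  "tail_point \<beta> b j = (\<Sum>i. (1 / \<beta> ^ Suc i) *\<^sub>R qv (b (j + i)))"

lemma summable_tail_point:
  assumes "1 < \<beta>" shows "summable (\<lambda>i. (1 / \<beta> ^ Suc i) *\<^sub>R qv (b (j + i)))"
proof (rule summable_comparison_test)
  show "\<exists>N. \<forall>n\<ge>N. norm ((1 / \<beta> ^ Suc n) *\<^sub>R qv (b (j + n))) \<le> (1 / \<beta>) ^ n"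
    using assms by (intro exI[of _ 0] allI impI) (simp add: qv_def power_one_over field_simps)
  show "summable (\<lambda>n. (1 / \<beta>) ^ n)"
    using assms by (intro summable_geometric) auto
qed

lemma tail_point_sums:
  "1 < \<beta> \<Longrightarrow> (\<lambda>i. (1 / \<beta> ^ Suc i) *\<^sub>R qv (b (j + i))) sums tail_point \<beta> b j"
  unfolding tail_point_def by (rule summable_sums[OF summable_tail_point])

lemma tail_point_Suc:
  assumes "1 < \<beta>" shows "tail_point \<beta> b (Suc j) = \<beta> *\<^sub>R tail_point \<beta> b j - qv (b j)"
proof -
  let ?f = "\<lambda>i. (1 / \<beta> ^ Suc i) *\<^sub>R qv (b (j + i))"
  have "(\<lambda>i. ?f (Suc i)) sums (tail_point \<beta> b j - ?f 0)"
    by (rule iffD2[OF sums_Suc_iff[of ?f]]) (use tail_point_sums[OF assms, of b j] in simp)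
  then have "(\<lambda>i. \<beta> *\<^sub>R ?f (Suc i)) sums (\<beta> *\<^sub>R (tail_point \<beta> b j - ?f 0))"
    by (rule sums_scaleR_right)
  moreover have "\<beta> *\<^sub>R ?f (Suc i) = (1 / \<beta> ^ Suc i) *\<^sub>R qv (b (Suc j + i))" for i
    using assms by simp
  ultimately have "(\<lambda>i. (1 / \<beta> ^ Suc i) *\<^sub>R qv (b (Suc j + i))) sums (\<beta> *\<^sub>R tail_point \<beta> b j - qv (b j))"
    using assms by (simp add: scaleR_diff_right)
  then show ?thesis
    using tail_point_sums[OF assms] sums_unique2 by blast
qed

lemma tail_point_in_S:
  assumes "1 < \<beta>" shows "tail_point \<beta> b j \<in> S \<beta>"
proof -
  let ?f = "\<lambda>i. (1 / \<beta> ^ Suc i) *\<^sub>R qv (b (j + i))"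
  obtain x y where xy: "tail_point \<beta> b j = (x, y)" by fastforce
  have x: "(\<lambda>i. fst (?f i)) sums x" and y: "(\<lambda>i. snd (?f i)) sums y"
    using bounded_linear.sums[OF bounded_linear_fst tail_point_sums[OF assms, of b j]]
      bounded_linear.sums[OF bounded_linear_snd tail_point_sums[OF assms, of b j]] by (simp_all add: xy)
  have geometric: "(\<lambda>i. (1 / \<beta>) * (1 / \<beta>) ^ i) sums (1 / (\<beta> - 1))"
    using sums_mult[OF geometric_sums[of "1 / \<beta>"], of "1 / \<beta>"] assms by (simp add: field_simps)
  have "0 \<le> fst (?f i)" "0 \<le> snd (?f i)" "fst (?f i) + snd (?f i) \<le> (1 / \<beta>) * (1 / \<beta>) ^ i" for i
    using assms by (auto simp: qv_def power_one_over)
  then have "0 \<le> x" "0 \<le> y" "x + y \<le> 1 / (\<beta> - 1)"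
    using sums_le[OF _ sums_zero x] sums_le[OF _ sums_zero y] sums_le[OF _ sums_add[OF x y] geometric]
    by blast+
  then show ?thesis by (simp add: xy S_def)
qed

section \<open>Counting visits\<close>

primrec hits :: "(nat \<Rightarrow> bool) \<Rightarrow> nat \<Rightarrow> nat" where
  "hits P 0 = 0"
| "hits P (Suc n) = (if P n then Suc (hits P n) else hits P n)"

text \<open>\<open>hits P n\<close> counts the \<open>i < n\<close> with \<open>P i\<close>, so \<open>hit_time P 0\<close> is the first time at which
  \<open>P\<close> holds.\<close>

definition hit_time :: "(nat \<Rightarrow> bool) \<Rightarrow> nat \<Rightarrow> nat" where
  "hit_time P k = (LEAST t. P t \<and> hits P t = k)"

lemma mono_hits: "mono (hits P)"
  by (rule incseq_SucI) simp

lemma hits_less_hits: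
  assumes "P n" "n < m" shows "hits P n < hits P m"
proof -
  have "hits P n < hits P (Suc n)" using assms(1) by simp
  also have "\<dots> \<le> hits P m" using assms(2) by (intro monoD[OF mono_hits]) simp
  finally show ?thesis .
qed

lemma hit_time_hits:
  assumes "P n" shows "hit_time P (hits P n) = n"
  unfolding hit_time_def
proof (rule Least_equality)
  show "P n \<and> hits P n = hits P n" using assms by simp
  show "n \<le> m" if "P m \<and> hits P m = hits P n" for m
    using hits_less_hits[of P m n] that by (cases "m < n") auto
qed

lemma hits_eq_if_no_hit_between:
  assumes "n \<le> m" "\<And>i. n \<le> i \<Longrightarrow> i < m \<Longrightarrow> \<not> P i"
  shows "hits P m = hits P n"
  using assms by (induction m rule: dec_induct) auto

lemma ex_hit_with_hits:
  assumes "\<exists>\<^sub>\<infinity> n. P n" shows "\<exists>n. P n \<and> hits P n = k"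
proof (induction k)
  case 0
  obtain n0 where "P n0" using INFM_EX[OF assms] by blast
  define n where "n = (LEAST n. P n)"
  have "P n" unfolding n_def using \<open>P n0\<close> by (rule LeastI)
  moreover have "hits P n = hits P 0"
    by (rule hits_eq_if_no_hit_between) (auto simp: n_def dest: not_less_Least)
  ultimately show ?case by auto
next
  case (Suc k)
  then obtain n where n: "P n" "hits P n = k" by blast
  obtain m0 where "n < m0" "P m0" using assms INFM_nat by blast
  define m where "m = (LEAST m. n < m \<and> P m)"
  have m: "n < m \<and> P m"
    unfolding m_def using \<open>n < m0\<close> \<open>P m0\<close> by (intro LeastI) blast
  have "hits P m = hits P (Suc n)"
    by (rule hits_eq_if_no_hit_between) (use m in \<open>auto simp: m_def dest: not_less_Least\<close>)
  then show ?case using m n by auto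
qed

lemma hit_time_spec:
  assumes "\<exists>\<^sub>\<infinity> n. P n"
  shows "P (hit_time P k)" and "hits P (hit_time P k) = k"
  using LeastI_ex[OF ex_hit_with_hits[OF assms, of k]] by (simp_all add: hit_time_def)

section \<open>Orbits of \<open>K\<^sub>\<beta>\<close>\<close>

lemma space_Omega_M: "\<omega> \<in> space Omega_M \<longleftrightarrow> (\<forall>i. \<omega> i \<in> {0, 1})"
  by (auto simp: Omega_M_def space_PiM PiE_def Pi_def)

lemma space_Upsilon_M: "\<upsilon> \<in> space Upsilon_M \<longleftrightarrow> (\<forall>i. \<upsilon> i \<in> {0, 1, 2})"
  by (auto simp: Upsilon_M_def space_PiM PiE_def Pi_def)

lemma space_X_M:
  "p \<in> space (X_M \<beta>) \<longleftrightarrow> fst p \<in> space Omega_M \<and> fst (snd p) \<in> space Upsilon_M \<and> snd (snd p) \<in> S \<beta>"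
  by (cases p) (auto simp: X_M_def S_M_def space_pair_measure space_restrict_space)

lemma K_components:
  "fst (K \<beta> p) = (if snd (snd p) \<in> Cs \<beta> then shift (fst p) else fst p)"
  "fst (snd (K \<beta> p)) = (if snd (snd p) \<in> C012 \<beta> then shift (fst (snd p)) else fst (snd p))"
  "snd (snd (K \<beta> p)) = \<beta> *\<^sub>R snd (snd p) - qv (digit \<beta> p)"
  by (simp_all add: K_def split_beta)

abbreviation orbit :: "real \<Rightarrow> (nat \<Rightarrow> nat) \<times> (nat \<Rightarrow> nat) \<times> (real \<times> real) \<Rightarrow> nat \<Rightarrow> real \<times> real" where
  "orbit \<beta> p n \<equiv> snd (snd ((K \<beta> ^^ n) p))"

lemma coins_K_iterate:
  "fst ((K \<beta> ^^ n) p) = (\<lambda>i. fst p (hits (\<lambda>t. orbit \<beta> p t \<in> Cs \<beta>) n + i))"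
  by (induction n) (simp_all add: K_components shift_def)

lemma choices_K_iterate:
  "fst (snd ((K \<beta> ^^ n) p)) = (\<lambda>i. fst (snd p) (hits (\<lambda>t. orbit \<beta> p t \<in> C012 \<beta>) n + i))"
  by (induction n) (simp_all add: K_components shift_def)

lemma K_iterate:
  "(K \<beta> ^^ n) p = ((\<lambda>i. fst p (hits (\<lambda>t. orbit \<beta> p t \<in> Cs \<beta>) n + i)),
     (\<lambda>i. fst (snd p) (hits (\<lambda>t. orbit \<beta> p t \<in> C012 \<beta>) n + i)), orbit \<beta> p n)"
  by (simp add: prod_eq_iff coins_K_iterate choices_K_iterate)

lemma orbit_Suc: "orbit \<beta> p (Suc n) = \<beta> *\<^sub>R orbit \<beta> p n - qv (phi \<beta> p n)"
  by (simp add: K_components phi_def)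

lemma orbit_in_S:
  assumes "1 < \<beta>" "\<beta> \<le> 3/2" "snd (snd p) \<in> S \<beta>" shows "orbit \<beta> p n \<in> S \<beta>"
proof (induction n)
  case (Suc n)
  then show ?case
    using digit_admissible[OF assms(1,2) Suc] by (simp add: K_components)
qed (use assms in simp)

lemma phi_eq_digit:
  "phi \<beta> p n = digit \<beta> ((\<lambda>i. fst p (hits (\<lambda>t. orbit \<beta> p t \<in> Cs \<beta>) n + i)),
     (\<lambda>i. fst (snd p) (hits (\<lambda>t. orbit \<beta> p t \<in> C012 \<beta>) n + i)), orbit \<beta> p n)"
  unfolding phi_def by (subst K_iterate) (rule refl)

lemma coin_for_phi:
  assumes "orbit \<beta> p n \<in> Cs \<beta>" "fst p \<in> space Omega_M"
  shows "coin_for \<beta> (orbit \<beta> p n) (phi \<beta> p n) = fst p (hits (\<lambda>t. orbit \<beta> p t \<in> Cs \<beta>) n)"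
  using assms unfolding phi_eq_digit by (simp add: coin_for_digit space_Omega_M)

lemma phi_at_C012:
  assumes "orbit \<beta> p n \<in> C012 \<beta>"
  shows "phi \<beta> p n = fst (snd p) (hits (\<lambda>t. orbit \<beta> p t \<in> C012 \<beta>) n)"
  using assms unfolding phi_eq_digit by (simp add: digit_C012)

lemma phi_in_space:
  assumes "p \<in> space (X_M \<beta>)" shows "phi \<beta> p \<in> space Upsilon_M"
  using assms digit_in_range unfolding phi_def space_Upsilon_M space_X_M
  by (simp add: choices_K_iterate)

lemma orbit_eq_tail_point:
  assumes "1 < \<beta>" "\<beta> \<le> 3/2" "p \<in> space (X_M \<beta>)"
  shows "orbit \<beta> p j = tail_point \<beta> (phi \<beta> p) j"
proof -
  have "snd (snd p) \<in> S \<beta>" using assms(3) by (simp add: space_X_M)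
  then have "range (\<lambda>n. orbit \<beta> p (j + n)) \<subseteq> S \<beta>"
    using orbit_in_S[OF assms(1,2)] by blast
  then have "bounded (range (\<lambda>n. orbit \<beta> p (j + n)))"
    by (rule bounded_subset[OF bounded_S])
  moreover have "orbit \<beta> p (j + Suc n) = \<beta> *\<^sub>R orbit \<beta> p (j + n) - qv (phi \<beta> p (j + n))" for n
    unfolding add_Suc_right by (rule orbit_Suc)
  ultimately have "(\<lambda>i. (1 / \<beta> ^ Suc i) *\<^sub>R qv (phi \<beta> p (j + i))) sums orbit \<beta> p (j + 0)"
    by (rule bounded_orbit_sums[OF assms(1)])
  then show ?thesis
    using tail_point_sums[OF assms(1), of "phi \<beta> p" j] by (simp add: sums_unique2)
qed

section \<open>The inverse of \<open>\<phi>\<close>\<close>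

definition decode :: "real \<Rightarrow> (nat \<Rightarrow> nat) \<Rightarrow> (nat \<Rightarrow> nat) \<times> (nat \<Rightarrow> nat) \<times> (real \<times> real)" where
  "decode \<beta> b =
     ((\<lambda>k. let t = hit_time (\<lambda>i. tail_point \<beta> b i \<in> Cs \<beta>) k in coin_for \<beta> (tail_point \<beta> b t) (b t)),
      (\<lambda>k. b (hit_time (\<lambda>i. tail_point \<beta> b i \<in> C012 \<beta>) k)),
      tail_point \<beta> b 0)"

lemma decode_phi:
  assumes "1 < \<beta>" "\<beta> \<le> 3/2" "p \<in> Z \<beta>"
  shows "decode \<beta> (phi \<beta> p) = p"
proof -
  have p: "p \<in> space (X_M \<beta>)" using assms(3) by (simp add: Z_def)
  have tail: "tail_point \<beta> (phi \<beta> p) = orbit \<beta> p"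
    using orbit_eq_tail_point[OF assms(1,2) p] by auto
  let ?C = "\<lambda>t. orbit \<beta> p t \<in> Cs \<beta>" and ?V = "\<lambda>t. orbit \<beta> p t \<in> C012 \<beta>"
  have C: "?C (hit_time ?C k)" "hits ?C (hit_time ?C k) = k"
    and V: "?V (hit_time ?V k)" "hits ?V (hit_time ?V k) = k" for k
    using hit_time_spec assms(3) by (auto simp: Z_def)
  have "fst (decode \<beta> (phi \<beta> p)) = fst p"
    using C p by (auto simp: decode_def tail coin_for_phi space_X_M)
  moreover have "fst (snd (decode \<beta> (phi \<beta> p))) = fst (snd p)"
    using V by (auto simp: decode_def tail phi_at_C012)
  moreover have "snd (snd (decode \<beta> (phi \<beta> p))) = snd (snd p)"
    by (simp add: decode_def tail)
  ultimately show ?thesis by (simp add: prod_eq_iff)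
qed

lemma digit_decode:
  assumes "1 < \<beta>" "b \<in> space Upsilon_M"
  shows "digit \<beta> ((\<lambda>i. fst (decode \<beta> b) (hits (\<lambda>t. tail_point \<beta> b t \<in> Cs \<beta>) n + i)),
     (\<lambda>i. fst (snd (decode \<beta> b)) (hits (\<lambda>t. tail_point \<beta> b t \<in> C012 \<beta>) n + i)),
     tail_point \<beta> b n) = b n"
proof (rule digit_eqI[OF assms(1) tail_point_in_S[OF assms(1)]])
  show "b n \<in> {0, 1, 2}" using assms(2) by (simp add: space_Upsilon_M)
  show "\<beta> *\<^sub>R tail_point \<beta> b n - qv (b n) \<in> S \<beta>"
    using tail_point_in_S[OF assms(1)] by (simp flip: tail_point_Suc[OF assms(1)])
qed (simp_all add: decode_def hit_time_hits)

lemma K_iterate_decode: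
  assumes "1 < \<beta>" "b \<in> space Upsilon_M"
  shows "(K \<beta> ^^ n) (decode \<beta> b) =
    ((\<lambda>i. fst (decode \<beta> b) (hits (\<lambda>t. tail_point \<beta> b t \<in> Cs \<beta>) n + i)),
     (\<lambda>i. fst (snd (decode \<beta> b)) (hits (\<lambda>t. tail_point \<beta> b t \<in> C012 \<beta>) n + i)),
     tail_point \<beta> b n)"
proof (induction n)
  case 0
  then show ?case by (simp add: decode_def)
next
  case (Suc n)
  then show ?case
    using digit_decode[OF assms, of n] by (simp add: K_def shift_def tail_point_Suc[OF assms(1)])
qed

lemma phi_decode:
  assumes "1 < \<beta>" "b \<in> space Upsilon_M"
  shows "phi \<beta> (decode \<beta> b) = b" and "orbit \<beta> (decode \<beta> b) n = tail_point \<beta> b n"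
  using digit_decode[OF assms] by (simp_all add: phi_def K_iterate_decode[OF assms] fun_eq_iff)

lemma decode_in_space:
  assumes "1 < \<beta>" "b \<in> space Upsilon_M" shows "decode \<beta> b \<in> space (X_M \<beta>)"
  using assms tail_point_in_S[OF assms(1)]
  by (auto simp: space_X_M space_Omega_M space_Upsilon_M decode_def coin_for_def Let_def)

lemma phi_in_D:
  assumes "1 < \<beta>" "\<beta> \<le> 3/2" "p \<in> Z \<beta>" shows "phi \<beta> p \<in> D \<beta>"
proof -
  have p: "p \<in> space (X_M \<beta>)" using assms(3) by (simp add: Z_def)
  show ?thesis
    using assms(3) phi_in_space[OF p] orbit_eq_tail_point[OF assms(1,2) p]
    by (simp add: Z_def D_def tail_point_def)
qed

lemma decode_in_Z:
  assumes "1 < \<beta>" "b \<in> D \<beta>" shows "decode \<beta> b \<in> Z \<beta>"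
proof -
  have b: "b \<in> space Upsilon_M"
    and "(\<exists>\<^sub>\<infinity>j. tail_point \<beta> b j \<in> Cs \<beta>) \<and> (\<exists>\<^sub>\<infinity>j. tail_point \<beta> b j \<in> C012 \<beta>)"
    using assms(2) unfolding D_def tail_point_def[symmetric] by auto
  then show ?thesis
    using decode_in_space[OF assms(1) b] phi_decode(2)[OF assms(1) b] by (simp add: Z_def)
qed

lemma bij_betw_phi:
  assumes "1 < \<beta>" "\<beta> \<le> 3/2" shows "bij_betw (phi \<beta>) (Z \<beta>) (D \<beta>)"
proof (rule bij_betw_byWitness[where f' = "decode \<beta>"])
  show "\<forall>p\<in>Z \<beta>. decode \<beta> (phi \<beta> p) = p" using decode_phi[OF assms] by blast
  show "\<forall>b\<in>D \<beta>. phi \<beta> (decode \<beta> b) = b" using phi_decode(1)[OF assms(1)] by (simp add: D_def)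
  show "phi \<beta> ` Z \<beta> \<subseteq> D \<beta>" using phi_in_D[OF assms] by blast
  show "decode \<beta> ` D \<beta> \<subseteq> Z \<beta>" using decode_in_Z[OF assms(1)] by blast
qed

section \<open>Measurability\<close>

lemma measurable_PiM_count_spaceI:
  assumes "\<And>i. (\<lambda>x. f x i) \<in> M \<rightarrow>\<^sub>M count_space UNIV" and "\<And>x i. x \<in> space M \<Longrightarrow> f x i \<in> A"
  shows "f \<in> M \<rightarrow>\<^sub>M PiM UNIV (\<lambda>_. count_space A)"
proof (rule measurable_PiM_single')
  show "(\<lambda>x. f x i) \<in> M \<rightarrow>\<^sub>M count_space A" for i
    by (rule measurable_count_space_extend[OF subset_UNIV _ assms(1)]) (use assms(2) in blast)
  show "f \<in> space M \<rightarrow> (\<Pi>\<^sub>E i\<in>UNIV. space (count_space A))"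
    using assms(2) by (simp add: Pi_iff PiE_iff)
qed

lemma measurable_hits:
  assumes "\<And>i. Measurable.pred M (P i)"
  shows "(\<lambda>x. hits (\<lambda>i. P i x) n) \<in> M \<rightarrow>\<^sub>M count_space UNIV"
proof (induction n)
  case (Suc n)
  have "(\<lambda>x. if P n x then Suc (hits (\<lambda>i. P i x) n) else hits (\<lambda>i. P i x) n) \<in> M \<rightarrow>\<^sub>M count_space UNIV"
    using assms[of n] by (intro measurable_If measurable_compose[OF Suc measurable_count_space] Suc) (simp add: pred_def)
  then show ?case by simp
qed simp

lemma measurable_hit_time:
  assumes "\<And>i. Measurable.pred M (P i)"
  shows "(\<lambda>x. hit_time (\<lambda>i. P i x) k) \<in> M \<rightarrow>\<^sub>M count_space UNIV"
proof -
  note [measurable] = assms measurable_hits[OF assms]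
  show ?thesis unfolding hit_time_def by measurable
qed

lemma measurable_shift: "shift \<in> PiM UNIV (\<lambda>_. M) \<rightarrow>\<^sub>M PiM UNIV (\<lambda>_. M)"
proof -
  have "(\<lambda>\<omega> i. \<omega> (Suc i)) \<in> PiM UNIV (\<lambda>_. M) \<rightarrow>\<^sub>M PiM UNIV (\<lambda>_. M)"
    by (rule measurable_PiM_single') (auto simp: space_PiM PiE_def Pi_def)
  then show ?thesis by (simp add: shift_def[abs_def])
qed

lemma measurable_component_count_space:
  "(\<lambda>x. x i) \<in> PiM UNIV (\<lambda>_. count_space A) \<rightarrow>\<^sub>M count_space UNIV"
  using measurable_compose[OF measurable_component_singleton[of i UNIV "\<lambda>_. count_space A"]
      measurable_count_space[of "\<lambda>x. x"]] by simp

lemma borel_measurable_fst_snd [measurable]: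
  "fst \<in> borel_measurable (borel :: (real \<times> real) measure)"
  "snd \<in> borel_measurable (borel :: (real \<times> real) measure)"
  by (rule borel_measurable_continuous_onI, intro continuous_intros)+

lemma sets_borel_regions:
  "E0 \<beta> \<in> sets borel" "E1 \<beta> \<in> sets borel" "E2 \<beta> \<in> sets borel"
  "C01 \<beta> \<in> sets borel" "C12 \<beta> \<in> sets borel" "C02 \<beta> \<in> sets borel" "C012 \<beta> \<in> sets borel"
  "Cs \<beta> \<in> sets borel"
proof -
  have pair: "{(x, y). P x y} = {z. P (fst z) (snd z)}" for P :: "real \<Rightarrow> real \<Rightarrow> bool" by auto
  show "E0 \<beta> \<in> sets borel" "E1 \<beta> \<in> sets borel" "E2 \<beta> \<in> sets borel"
    "C01 \<beta> \<in> sets borel" "C12 \<beta> \<in> sets borel" "C02 \<beta> \<in> sets borel" "C012 \<beta> \<in> sets borel"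
    "Cs \<beta> \<in> sets borel"
    unfolding Cs_def E0_def E1_def E2_def C01_def C12_def C02_def C012_def S_def pair by measurable
qed

lemma measurable_X_M_components:
  "fst \<in> X_M \<beta> \<rightarrow>\<^sub>M Omega_M"
  "(\<lambda>p. fst (snd p)) \<in> X_M \<beta> \<rightarrow>\<^sub>M Upsilon_M"
  "(\<lambda>p. snd (snd p)) \<in> borel_measurable (X_M \<beta>)"
proof -
  show "fst \<in> X_M \<beta> \<rightarrow>\<^sub>M Omega_M" "(\<lambda>p. fst (snd p)) \<in> X_M \<beta> \<rightarrow>\<^sub>M Upsilon_M"
    unfolding X_M_def by measurable
  have "(\<lambda>p. snd (snd p)) \<in> X_M \<beta> \<rightarrow>\<^sub>M S_M \<beta>" unfolding X_M_def by measurable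
  then show "(\<lambda>p. snd (snd p)) \<in> borel_measurable (X_M \<beta>)"
    unfolding S_M_def measurable_restrict_space2_iff by simp
qed

lemma measurable_coins_choices [measurable]:
  "(\<lambda>p. fst p i) \<in> X_M \<beta> \<rightarrow>\<^sub>M count_space UNIV"
  "(\<lambda>p. fst (snd p) i) \<in> X_M \<beta> \<rightarrow>\<^sub>M count_space UNIV"
  by (rule measurable_compose[OF measurable_X_M_components(1)
        measurable_component_count_space[of i "{0, 1::nat}", folded Omega_M_def]],
      rule measurable_compose[OF measurable_X_M_components(2)
        measurable_component_count_space[of i "{0, 1, 2::nat}", folded Upsilon_M_def]])

lemmas pred_X_M_regions [measurable] =
  sets_borel_regions[THEN pred_sets2, OF measurable_X_M_components(3)]

lemma measurable_digit [measurable]: "digit \<beta> \<in> X_M \<beta> \<rightarrow>\<^sub>M count_space UNIV"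
  unfolding digit_def[abs_def] split_beta by measurable

lemma measurable_K:
  assumes "1 < \<beta>" "\<beta> \<le> 3/2" shows "K \<beta> \<in> X_M \<beta> \<rightarrow>\<^sub>M X_M \<beta>"
proof -
  have coins: "(\<lambda>p. if snd (snd p) \<in> Cs \<beta> then shift (fst p) else fst p) \<in> X_M \<beta> \<rightarrow>\<^sub>M Omega_M"
    by (rule measurable_If[OF measurable_compose[OF measurable_X_M_components(1)
          measurable_shift[of "count_space {0, 1::nat}", folded Omega_M_def]]
          measurable_X_M_components(1)]) measurable
  have choices: "(\<lambda>p. if snd (snd p) \<in> C012 \<beta> then shift (fst (snd p)) else fst (snd p))
      \<in> X_M \<beta> \<rightarrow>\<^sub>M Upsilon_M"
    by (rule measurable_If[OF measurable_compose[OF measurable_X_M_components(2)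
          measurable_shift[of "count_space {0, 1, 2::nat}", folded Upsilon_M_def]]
          measurable_X_M_components(2)]) measurable
  have "(\<lambda>p. \<beta> *\<^sub>R snd (snd p) - qv (digit \<beta> p)) \<in> borel_measurable (X_M \<beta>)"
    using measurable_X_M_components(3) by measurable
  then have point: "(\<lambda>p. \<beta> *\<^sub>R snd (snd p) - qv (digit \<beta> p)) \<in> X_M \<beta> \<rightarrow>\<^sub>M S_M \<beta>"
    unfolding S_M_def
    by (rule measurable_restrict_space2[rotated]) (simp add: Pi_iff space_X_M digit_admissible[OF assms])
  have "K \<beta> = (\<lambda>p. (if snd (snd p) \<in> Cs \<beta> then shift (fst p) else fst p,
      if snd (snd p) \<in> C012 \<beta> then shift (fst (snd p)) else fst (snd p),
      \<beta> *\<^sub>R snd (snd p) - qv (digit \<beta> p)))"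
    by (simp add: fun_eq_iff K_components prod_eq_iff)
  also have "\<dots> \<in> X_M \<beta> \<rightarrow>\<^sub>M Omega_M \<Otimes>\<^sub>M (Upsilon_M \<Otimes>\<^sub>M S_M \<beta>)"
    using coins choices point by (intro measurable_Pair)
  finally show ?thesis unfolding X_M_def .
qed

lemma measurable_phi:
  assumes "1 < \<beta>" "\<beta> \<le> 3/2" shows "phi \<beta> \<in> X_M \<beta> \<rightarrow>\<^sub>M Upsilon_M"
  unfolding Upsilon_M_def
proof (rule measurable_PiM_count_spaceI)
  show "(\<lambda>p. phi \<beta> p n) \<in> X_M \<beta> \<rightarrow>\<^sub>M count_space UNIV" for n
    unfolding phi_def by (rule measurable_compose[OF measurable_compose_n[OF measurable_K[OF assms]] measurable_digit])
  show "phi \<beta> p n \<in> {0, 1, 2}" if "p \<in> space (X_M \<beta>)" for p n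
    using phi_in_space[OF that] by (simp add: space_Upsilon_M)
qed

lemma measurable_Upsilon_M_component [measurable]: "(\<lambda>b. b i) \<in> Upsilon_M \<rightarrow>\<^sub>M count_space UNIV"
  by (rule measurable_component_count_space[of i "{0, 1, 2::nat}", folded Upsilon_M_def])

lemma borel_measurable_tail_point [measurable]: "(\<lambda>b. tail_point \<beta> b j) \<in> borel_measurable Upsilon_M"
proof -
  have "qv \<in> count_space UNIV \<rightarrow>\<^sub>M borel" by simp
  note [measurable] = measurable_compose[OF measurable_Upsilon_M_component this]
  show ?thesis unfolding tail_point_def by measurable
qed

lemmas pred_Upsilon_M_regions [measurable] =
  sets_borel_regions[THEN pred_sets2, OF borel_measurable_tail_point]

lemma measurable_decode:
  assumes "1 < \<beta>" shows "decode \<beta> \<in> Upsilon_M \<rightarrow>\<^sub>M X_M \<beta>"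
proof -
  note [measurable] =
    measurable_hit_time[where M = Upsilon_M and P = "\<lambda>i b. tail_point \<beta> b i \<in> Cs \<beta>"]
    measurable_hit_time[where M = Upsilon_M and P = "\<lambda>i b. tail_point \<beta> b i \<in> C012 \<beta>"]
  have coins: "(\<lambda>b. fst (decode \<beta> b)) \<in> Upsilon_M \<rightarrow>\<^sub>M Omega_M"
    unfolding Omega_M_def
  proof (rule measurable_PiM_count_spaceI)
    show "(\<lambda>b. fst (decode \<beta> b) k) \<in> Upsilon_M \<rightarrow>\<^sub>M count_space UNIV" for k
      unfolding decode_def Let_def fst_conv
      by (rule measurable_compose_countable[where f = "\<lambda>t b. coin_for \<beta> (tail_point \<beta> b t) (b t)"])
        (unfold coin_for_def, measurable)
  qed (auto simp: decode_def coin_for_def Let_def)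
  have choices: "(\<lambda>b. fst (snd (decode \<beta> b))) \<in> Upsilon_M \<rightarrow>\<^sub>M Upsilon_M"
  proof (rule measurable_PiM_count_spaceI[where A = "{0, 1, 2::nat}"
        and f = "\<lambda>b. fst (snd (decode \<beta> b))", folded Upsilon_M_def])
    show "(\<lambda>b. fst (snd (decode \<beta> b)) k) \<in> Upsilon_M \<rightarrow>\<^sub>M count_space UNIV" for k
      unfolding decode_def fst_conv snd_conv
      by (rule measurable_compose_countable[where f = "\<lambda>t b. b t", OF measurable_Upsilon_M_component])
        measurable
  qed (auto simp: decode_def space_Upsilon_M)
  have point: "(\<lambda>b. tail_point \<beta> b 0) \<in> Upsilon_M \<rightarrow>\<^sub>M S_M \<beta>"
    unfolding S_M_def by (rule measurable_restrict_space2) (auto intro: tail_point_in_S[OF assms])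
  have "decode \<beta> = (\<lambda>b. (fst (decode \<beta> b), fst (snd (decode \<beta> b)), tail_point \<beta> b 0))"
    by (simp add: fun_eq_iff decode_def)
  also have "\<dots> \<in> Upsilon_M \<rightarrow>\<^sub>M X_M \<beta>"
    unfolding X_M_def using coins choices point by (intro measurable_Pair)
  finally show ?thesis .
qed

lemma the_inv_into_phi:
  assumes "1 < \<beta>" "\<beta> \<le> 3/2" "b \<in> D \<beta>"
  shows "the_inv_into (Z \<beta>) (phi \<beta>) b = decode \<beta> b"
proof (rule the_inv_into_f_eq)
  show "inj_on (phi \<beta>) (Z \<beta>)" using bij_betw_phi[OF assms(1,2)] by (rule bij_betw_imp_inj_on)
  show "phi \<beta> (decode \<beta> b) = b" using assms(3) phi_decode(1)[OF assms(1)] by (simp add: D_def)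
  show "decode \<beta> b \<in> Z \<beta>" by (rule decode_in_Z[OF assms(1,3)])
qed

theorem lemma4p4:
  fixes \<beta> :: real
  assumes "1 < \<beta>" and "\<beta> \<le> 3/2"
  shows "bij_betw (phi \<beta>) (Z \<beta>) (D \<beta>)
       \<and> phi \<beta> \<in> measurable (restrict_space (X_M \<beta>) (Z \<beta>)) (restrict_space Upsilon_M (D \<beta>))
       \<and> the_inv_into (Z \<beta>) (phi \<beta>)
           \<in> measurable (restrict_space Upsilon_M (D \<beta>)) (restrict_space (X_M \<beta>) (Z \<beta>))"
proof (intro conjI)
  show "bij_betw (phi \<beta>) (Z \<beta>) (D \<beta>)" by (rule bij_betw_phi[OF assms])
  show "phi \<beta> \<in> measurable (restrict_space (X_M \<beta>) (Z \<beta>)) (restrict_space Upsilon_M (D \<beta>))"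
    by (rule measurable_restrict_space3[OF measurable_phi[OF assms]]) (use phi_in_D[OF assms] in blast)
  have "decode \<beta> \<in> measurable (restrict_space Upsilon_M (D \<beta>)) (restrict_space (X_M \<beta>) (Z \<beta>))"
    by (rule measurable_restrict_space3[OF measurable_decode[OF assms(1)]])
      (use decode_in_Z[OF assms(1)] in blast)
  then show "the_inv_into (Z \<beta>) (phi \<beta>)
      \<in> measurable (restrict_space Upsilon_M (D \<beta>)) (restrict_space (X_M \<beta>) (Z \<beta>))"
    by (rule measurable_cong[THEN iffD1, rotated])
      (simp add: space_restrict_space the_inv_into_phi[OF assms])
qed

end
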